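(* Let $\mathbf{k}$ be a field, let $d \geq 1$, let $A = \mathbf{k}^{d}$ (the product of $d$ copies of $\mathbf{k}$, with componentwise operations and unit $1_A = (1,\dots,1)$), let $M$ be a finite-dimensional $\mathbf{k}$-vector space, and let $\phi : A \to \mathrm{End}_{\mathbf{k}}(M)$ be a $\mathbf{k}$-linear map. Let $n > 2$ be a natural number and assume that $\mathbf{k}$ contains $n$ distinct $n$-th roots of unity (equivalently, $\mathbf{k}$ contains a primitive $n$-th root of unity). If $\phi(1_A) = \mathrm{id}_M$ and for every $a \in A$ with $a^n = 1_A$ we have $\phi(a)^n = \mathrm{id}_M$, then $\phi$ is a (unital) $\mathbf{k}$-algebra homomorphism. *)

theory Defs
  imports "HOL-Analysis.Analysis"
begin

end

theory Submission
  imports Defs "HOL-Computational_Algebra.Polynomial" "HOL-Computational_Algebra.Primes"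
begin

text \<open>Write \<open>P\<^sub>i = \<phi>(e\<^sub>i)\<close>. Since \<open>k\<close> has \<open>n\<close> distinct \<open>n\<close>-th roots of unity, \<open>n \<noteq> 0\<close> in \<open>k\<close>.
  For a 0/1-vector \<open>u\<close> and an \<open>n\<close>-th root of unity \<open>\<zeta>\<close>, the vector \<open>1 + (\<zeta> - 1) u\<close> is again an
  \<open>n\<close>-th root of unity, so \<open>(I + (\<zeta> - 1) \<phi>(u))\<^sup>n = I\<close>. A discrete Fourier transform over \<open>\<zeta>\<close>
  turns these identities into \<open>P\<^sup>n\<^sup>-\<^sup>1 (I - P) = P (I - P)\<^sup>n\<^sup>-\<^sup>1 = 0\<close> for \<open>P = \<phi>(u)\<close>, and as
  \<open>X\<close> and \<open>1 - X\<close> are comaximal this forces \<open>P\<^sup>2 = P\<close>. Applied to \<open>e\<^sub>i\<close>, \<open>e\<^sub>j\<close> and \<open>e\<^sub>i + e\<^sub>j\<close>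
  this makes \<open>P\<^sub>i\<close> and \<open>P\<^sub>j\<close> commuting idempotents, and the root of unity with entries \<open>\<zeta>, \<omega>\<close> at
  \<open>i, j\<close>, where \<open>(\<zeta> + \<omega> - 1)\<^sup>n \<noteq> 1\<close>, shows \<open>P\<^sub>i P\<^sub>j = 0\<close>. So the \<open>P\<^sub>i\<close> are orthogonal
  idempotents, and by linearity \<open>\<phi>\<close> is multiplicative.\<close>

lemma finite_roots_of_unity:
  assumes "n > 0"
  shows "finite {z::'k::idom. z ^ n = 1}"
    and "card {z::'k::idom. z ^ n = 1} \<le> n"
proof -
  define p :: "'k poly" where "p = monom 1 n - 1"
  have roots: "{z::'k. z ^ n = 1} = {z. poly p z = 0}"
    by (simp add: p_def poly_monom)
  have "coeff p n = 1"
    using assms by (simp add: p_def)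
  then have "p \<noteq> 0" by auto
  moreover have "degree p \<le> n"
    unfolding p_def by (intro degree_diff_le) (auto simp: degree_monom_le)
  ultimately show "finite {z::'k. z ^ n = 1}" "card {z::'k. z ^ n = 1} \<le> n"
    using card_poly_roots_bound poly_roots_finite by (fastforce simp: roots)+
qed

lemma roots_of_unity_not_subset:
  assumes card: "card {z::'k::idom. z ^ n = 1} = n" and "0 < m" "m < n"
  shows "\<not> {z::'k. z ^ n = 1} \<subseteq> {z. z ^ m = 1}"
proof
  assume "{z::'k. z ^ n = 1} \<subseteq> {z. z ^ m = 1}"
  then have "n \<le> card {z::'k. z ^ m = 1}"
    using card card_mono finite_roots_of_unity(1)[OF \<open>0 < m\<close>] by metis
  also have "\<dots> \<le> m"
    using finite_roots_of_unity(2)[OF \<open>0 < m\<close>] .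
  finally show False using \<open>m < n\<close> by simp
qed

lemma of_nat_neq_0_if_card_roots_of_unity:
  assumes card: "card {z::'k::field. z ^ n = 1} = n" and "n > 0"
  shows "(of_nat n :: 'k) \<noteq> 0"
proof
  let ?p = "CHAR('k)"
  assume "(of_nat n :: 'k) = 0"
  then have "?p dvd n" by (simp add: of_nat_eq_0_iff_char_dvd)
  then obtain m where n: "n = ?p * m" by blast
  with \<open>n > 0\<close> have "?p > 0" "m > 0" by auto
  then have p: "prime ?p" by (simp add: prime_CHAR_semidom)
  then have "m < n" using n \<open>m > 0\<close> prime_gt_1_nat by auto
  moreover have "{z::'k. z ^ n = 1} \<subseteq> {z. z ^ m = 1}"
  proof safe
    fix z :: 'k assume "z ^ n = 1"
    have "(z ^ m - 1) ^ ?p = (z ^ m) ^ ?p + (- 1) ^ ?p"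
      using freshmans_dream[OF p refl, of "z ^ m" "- 1"] by simp
    also have "\<dots> = z ^ n - 1"
      using minus_power_prime_CHAR[OF refl p] by (simp add: n power_mult mult.commute)
    finally show "z ^ m = 1" using \<open>z ^ n = 1\<close> by simp
  qed
  ultimately show False
    using roots_of_unity_not_subset[OF card \<open>m > 0\<close>] by blast
qed

lemma sum_roots_of_unity_power:
  assumes card: "card {z::'k::field. z ^ n = 1} = n" and "n > 0"
  shows "(\<Sum>z | z ^ n = 1. z ^ m) = (if n dvd m then of_nat n else (0::'k))"
proof -
  let ?U = "{z::'k. z ^ n = 1}"
  define r where "r = m mod n"
  have power_m: "z ^ m = z ^ r" if "z \<in> ?U" for z
  proof -
    have "z ^ m = (z ^ n) ^ (m div n) * z ^ r"
      unfolding r_def power_mult[symmetric] power_add[symmetric] by simp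
    with that show ?thesis by simp
  qed
  show ?thesis
  proof (cases "r = 0")
    case True
    then have "(\<Sum>z\<in>?U. z ^ m) = (\<Sum>z\<in>?U. 1)"
      using power_m by (intro sum.cong refl) simp
    with True card show ?thesis by (simp add: r_def dvd_eq_mod_eq_0)
  next
    case False
    have "r < n" using \<open>n > 0\<close> by (simp add: r_def)
    obtain w :: 'k where w: "w ^ n = 1" "w ^ r \<noteq> 1"
      using roots_of_unity_not_subset[OF card, of r] \<open>r \<noteq> 0\<close> \<open>r < n\<close> by auto
    then have "w \<noteq> 0" using \<open>n > 0\<close> by (auto simp: power_0_left)
    have "bij_betw ((*) w) ?U ?U"
    proof (rule bij_betwI[where g = "\<lambda>z. z / w"])
      show "(*) w \<in> ?U \<rightarrow> ?U" "(\<lambda>z. z / w) \<in> ?U \<rightarrow> ?U"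
        using w by (simp_all add: power_mult_distrib power_divide)
    qed (use \<open>w \<noteq> 0\<close> in simp_all)
    then have "(\<Sum>z\<in>?U. z ^ r) = (\<Sum>z\<in>?U. (w * z) ^ r)"
      by (rule sum.reindex_bij_betw[symmetric])
    also have "\<dots> = w ^ r * (\<Sum>z\<in>?U. z ^ r)"
      by (simp add: power_mult_distrib sum_distrib_left)
    finally have "(1 - w ^ r) * (\<Sum>z\<in>?U. z ^ r) = 0"
      by (simp add: algebra_simps)
    with w(2) have "(\<Sum>z\<in>?U. z ^ r) = 0" by simp
    moreover have "(\<Sum>z\<in>?U. z ^ m) = (\<Sum>z\<in>?U. z ^ r)"
      using power_m by (rule sum.cong[OF refl])
    ultimately show ?thesis
      using False by (simp add: r_def dvd_eq_mod_eq_0)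
  qed
qed

lemma exists_roots_of_unity_sum_minus_1_not_root:
  assumes card: "card {z::'k::field. z ^ n = 1} = n" and "n \<ge> 2"
  shows "\<exists>a b. a ^ n = 1 \<and> b ^ n = 1 \<and> (a + b - 1) ^ n \<noteq> (1::'k)"
proof (rule ccontr)
  let ?U = "{z::'k. z ^ n = 1}"
  assume "\<not> ?thesis"
  then have closed: "a + b - 1 \<in> ?U" if "a \<in> ?U" "b \<in> ?U" for a b
    using that by auto
  obtain w :: 'k where w: "w ^ n = 1" "w \<noteq> 1"
    using roots_of_unity_not_subset[OF card, of 1] \<open>n \<ge> 2\<close> by (auto simp del: power_one_right)
  have fin: "finite ?U"
    by (rule finite_roots_of_unity(1)) (use \<open>n \<ge> 2\<close> in simp)
  let ?f = "\<lambda>z. z + (w - 1)"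
  have "?f ` ?U = ?U"
    using closed[of _ w] w by (intro endo_inj_surj[OF fin]) (auto simp: inj_on_def algebra_simps)
  then have "(\<Sum>z\<in>?U. z) = (\<Sum>z\<in>?U. z + (w - 1))"
    by (metis (no_types, lifting) inj_on_def add_right_cancel sum.reindex_cong)
  also have "\<dots> = (\<Sum>z\<in>?U. z) + of_nat n * (w - 1)"
    by (simp add: sum.distrib card)
  finally have "of_nat n * (w - 1) = 0" by simp
  with w(2) of_nat_neq_0_if_card_roots_of_unity[OF card] \<open>n \<ge> 2\<close> show False by simp
qed

lemma smult_sum_right: "smult a (\<Sum>i\<in>S. f i) = (\<Sum>i\<in>S. smult a (f i))"
  by (induction S rule: infinite_finite_induct) (simp_all add: smult_add_right)

lemma sum_roots_of_unity_binomial: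
  fixes p q :: "'k::field poly"
  assumes card: "card {z::'k. z ^ n = 1} = n" and j: "0 < j" "j < n"
  shows "(\<Sum>\<zeta> | \<zeta> ^ n = 1. smult (\<zeta> ^ j) ((smult \<zeta> p + q) ^ n - 1))
           = smult (of_nat (n * (n choose j))) (p ^ (n - j) * q ^ j)"
proof -
  let ?U = "{\<zeta>::'k. \<zeta> ^ n = 1}"
  define c where "c k = of_nat (n choose k) * p ^ k * q ^ (n - k)" for k
  have n: "n > 0" using j by simp
  have root_sum: "(\<Sum>\<zeta>\<in>?U. \<zeta> ^ m) = (if n dvd m then of_nat n else 0)" for m
    by (rule sum_roots_of_unity_power[OF card n])
  have "(\<Sum>\<zeta>\<in>?U. smult (\<zeta> ^ j) ((smult \<zeta> p + q) ^ n - 1))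
      = (\<Sum>\<zeta>\<in>?U. (\<Sum>k\<le>n. smult (\<zeta> ^ (j + k)) (c k)) - smult (\<zeta> ^ j) 1)"
    by (intro sum.cong refl)
      (simp add: binomial_ring c_def smult_power smult_diff_right smult_sum_right power_add
        sum_distrib_left mult_ac)
  also have "\<dots> = (\<Sum>k\<le>n. smult (\<Sum>\<zeta>\<in>?U. \<zeta> ^ (j + k)) (c k)) - smult (\<Sum>\<zeta>\<in>?U. \<zeta> ^ j) 1"
    by (simp only: sum_subtractf smult_sum) (subst sum.swap, rule refl)
  also have "(\<Sum>\<zeta>\<in>?U. \<zeta> ^ j) = 0"
    using root_sum[of j] j by (auto dest: dvd_imp_le)
  also have "(\<Sum>k\<le>n. smult (\<Sum>\<zeta>\<in>?U. \<zeta> ^ (j + k)) (c k))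
      = (\<Sum>k\<le>n. if k = n - j then smult (of_nat n) (c k) else 0)"
  proof (intro sum.cong refl)
    fix k assume "k \<in> {..n}"
    have "n dvd (j + k) \<longleftrightarrow> j + k = n"
    proof
      assume "n dvd (j + k)"
      then obtain t where t: "j + k = n * t" by blast
      have "j + k < n * 2" using \<open>k \<in> {..n}\<close> j by simp
      then have "t < 2" using t by simp
      moreover have "t \<noteq> 0" using t j by (metis add_is_0 mult_0_right not_gr0)
      ultimately show "j + k = n" using t by simp
    qed simp
    then show "smult (\<Sum>\<zeta>\<in>?U. \<zeta> ^ (j + k)) (c k) = (if k = n - j then smult (of_nat n) (c k) else 0)"
      using root_sum[of "j + k"] j by auto
  qed
  also have "\<dots> = smult (of_nat n) (c (n - j))"
    by simp
  finally show ?thesis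
    using j by (simp add: c_def binomial_symmetric[of j n, symmetric] of_nat_poly mult_ac)
qed

lemma comaximal_power:
  fixes x y :: "'a::comm_ring_1"
  assumes "a * x + b * y = 1"
  shows "\<exists>c d. c * x ^ m + d * y = 1"
proof (induction m)
  case 0
  show ?case by (intro exI[of _ 1] exI[of _ 0]) simp
next
  case (Suc m)
  then obtain c d where cd: "c * x ^ m + d * y = 1" by blast
  have "(c * x ^ m + d * y) * (a * x + b * y) = (c * a) * x ^ Suc m + (c * x ^ m * b + d * (a * x + b * y)) * y"
    by (simp add: algebra_simps)
  with cd assms show ?case by (metis mult_1)
qed

lemma comaximal_powers:
  fixes x y :: "'a::comm_ring_1"
  assumes "x + y = 1"
  shows "\<exists>c d. c * x ^ m + d * y ^ k = 1"
proof -
  have "1 * x + 1 * y = 1" using assms by simp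
  then obtain a b where "b * y + a * x ^ m = 1"
    using comaximal_power by (metis add.commute)
  then obtain c d where "c * y ^ k + d * x ^ m = 1"
    using comaximal_power by blast
  then show ?thesis by (metis add.commute)
qed

text \<open>\<open>poly_op s P p\<close> is the operator \<open>p(P)\<close>, computed by Horner's rule.\<close>

definition poly_op :: "('k::field \<Rightarrow> 'm::ab_group_add \<Rightarrow> 'm) \<Rightarrow> ('m \<Rightarrow> 'm) \<Rightarrow> 'k poly \<Rightarrow> 'm \<Rightarrow> 'm"
  where "poly_op s P p = fold_coeffs (\<lambda>a f x. s a x + P (f x)) p (\<lambda>x. 0)"

locale linear_endomorphism = Vector_Spaces.linear scale scale P
  for scale :: "'k::field \<Rightarrow> 'm::ab_group_add \<Rightarrow> 'm" and P :: "'m \<Rightarrow> 'm"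
begin

lemma poly_op_0 [simp]: "poly_op scale P 0 = (\<lambda>x. 0)"
  by (simp add: poly_op_def)

lemma poly_op_pCons: "poly_op scale P (pCons a p) = (\<lambda>x. scale a x + P (poly_op scale P p x))"
  by (cases "a = 0 \<and> p = 0") (auto simp: poly_op_def)

lemma poly_op_at_0 [simp]: "poly_op scale P p 0 = 0"
  by (induction p) (simp_all add: poly_op_pCons)

lemma poly_op_add: "poly_op scale P (p + q) = (\<lambda>x. poly_op scale P p x + poly_op scale P q x)"
  by (induction p q rule: poly_induct2)
    (simp_all add: poly_op_pCons add vs1.scale_left_distrib algebra_simps)

lemma poly_op_smult: "poly_op scale P (smult c p) = (\<lambda>x. scale c (poly_op scale P p x))"
  by (induction p) (simp_all add: poly_op_pCons scale vs1.scale_right_distrib)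

lemma poly_op_mult: "poly_op scale P (p * q) = poly_op scale P p \<circ> poly_op scale P q"
  by (induction p) (simp_all add: poly_op_pCons poly_op_add poly_op_smult comp_def)

lemma poly_op_1: "poly_op scale P 1 = id"
  by (simp add: one_pCons poly_op_pCons id_def)

lemma poly_op_X: "poly_op scale P [:0, 1:] = P"
  by (simp add: poly_op_pCons)

lemma poly_op_diff: "poly_op scale P (p - q) = (\<lambda>x. poly_op scale P p x - poly_op scale P q x)"
  using poly_op_add[of p "- q"] poly_op_smult[of "- 1" q] by simp

lemma poly_op_power: "poly_op scale P (p ^ k) = poly_op scale P p ^^ k"
  by (induction k) (simp_all add: poly_op_1 poly_op_mult)

lemma poly_op_sum: "poly_op scale P (\<Sum>i\<in>A. f i) = (\<lambda>x. \<Sum>i\<in>A. poly_op scale P (f i) x)"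
  by (induction A rule: infinite_finite_induct) (simp_all add: poly_op_add)

text \<open>Each \<open>(\<zeta> X + 1 - X)\<^sup>n - 1\<close> annihilates \<open>P\<close>, and averaging these polynomials against
  \<open>\<zeta>\<^sup>j\<close> over the roots of unity isolates the binomial term \<open>X\<^sup>n\<^sup>-\<^sup>j (1 - X)\<^sup>j\<close>, whose
  coefficient \<open>n \<cdot> (n choose j)\<close> is invertible for \<open>j = 1\<close> and \<open>j = n - 1\<close>.\<close>

lemma poly_op_binomial_term_eq_0:
  assumes card: "card {z::'k. z ^ n = 1} = n" and "n \<ge> 2" and "j = 1 \<or> j = n - 1"
    and unipotent: "\<And>\<zeta>. \<zeta> ^ n = 1 \<Longrightarrow> (\<lambda>x. x + scale (\<zeta> - 1) (P x)) ^^ n = id"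
  shows "poly_op scale P ([:0, 1:] ^ (n - j) * (1 - [:0, 1:]) ^ j) x = 0"
proof -
  let ?X = "[:0, 1::'k:]"
  let ?Y = "1 - ?X"
  let ?ev = "poly_op scale P"
  have annihilates: "?ev ((smult \<zeta> ?X + ?Y) ^ n - 1) = (\<lambda>x. 0)" if "\<zeta> ^ n = 1" for \<zeta>
  proof -
    have "?ev (smult \<zeta> ?X + ?Y) = (\<lambda>x. x + scale (\<zeta> - 1) (P x))"
      by (simp only: poly_op_add poly_op_smult poly_op_diff poly_op_1 poly_op_X)
        (simp add: vs1.scale_left_diff_distrib algebra_simps)
    then show ?thesis
      using unipotent[OF that] by (simp add: poly_op_diff poly_op_power poly_op_1)
  qed
  have j: "0 < j" "j < n" "n choose j = n"
    using assms(2,3) binomial_symmetric[of 1 n] by (auto simp: choose_one)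
  have "scale (of_nat (n * (n choose j))) (?ev (?X ^ (n - j) * ?Y ^ j) x)
      = ?ev (\<Sum>\<zeta> | \<zeta> ^ n = 1. smult (\<zeta> ^ j) ((smult \<zeta> ?X + ?Y) ^ n - 1)) x"
    by (simp only: sum_roots_of_unity_binomial[OF card j(1,2)] poly_op_smult)
  also have "\<dots> = 0"
    by (simp add: poly_op_sum poly_op_smult annihilates del: smult_pCons)
  finally show ?thesis
    using of_nat_neq_0_if_card_roots_of_unity[OF card] j by simp
qed

lemma idempotent_if_unipotent_at_roots_of_unity:
  assumes card: "card {z::'k. z ^ n = 1} = n" and "n \<ge> 2"
    and unipotent: "\<And>\<zeta>. \<zeta> ^ n = 1 \<Longrightarrow> (\<lambda>x. x + scale (\<zeta> - 1) (P x)) ^^ n = id"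
  shows "P (P x) = P x"
proof -
  let ?X = "[:0, 1::'k:]"
  let ?Y = "1 - ?X"
  let ?ev = "poly_op scale P"
  have vanish: "?ev (?X ^ (n - j) * ?Y ^ j) y = 0" if "j = 1 \<or> j = n - 1" for j y
    using poly_op_binomial_term_eq_0[OF card \<open>n \<ge> 2\<close> that unipotent] .
  obtain a b where ab: "a * ?X ^ (n - 2) + b * ?Y ^ (n - 2) = 1"
    using comaximal_powers[of ?X ?Y "n - 2" "n - 2"] by auto
  have "?X * ?Y = a * (?X ^ (n - 1) * ?Y ^ 1) + b * (?X ^ (n - (n - 1)) * ?Y ^ (n - 1))"
  proof -
    have "n - 1 = Suc (n - 2)" "n - (n - 1) = 1" using \<open>n \<ge> 2\<close> by auto
    then have "a * (?X ^ (n - 1) * ?Y ^ 1) + b * (?X ^ (n - (n - 1)) * ?Y ^ (n - 1))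
        = ?X * ?Y * (a * ?X ^ (n - 2) + b * ?Y ^ (n - 2))"
      by (simp only: power_Suc power_one_right) (simp add: algebra_simps)
    then show ?thesis by (simp add: ab)
  qed
  then have "?ev (?X * ?Y) x = 0"
    using vanish[of 1] vanish[of "n - 1"] by (simp only: poly_op_add poly_op_mult comp_def) simp
  moreover have "?ev (?X * ?Y) x = P x - P (P x)"
    by (simp only: poly_op_mult poly_op_diff poly_op_1 poly_op_X) (simp add: diff)
  ultimately show ?thesis by (metis diff_eq_diff_eq diff_self)
qed

end

lemma idempotents_commute_if_sum_idempotent:
  fixes scale :: "'k::field \<Rightarrow> 'm::ab_group_add \<Rightarrow> 'm"
  assumes A: "Vector_Spaces.linear scale scale A" and B: "Vector_Spaces.linear scale scale B"
    and idem: "\<And>x. A (A x) = A x" "\<And>x. B (B x) = B x"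
    and sum_idem: "\<And>x. A (A x + B x) + B (A x + B x) = A x + B x"
  shows "A (B x) = B (A x)"
proof -
  interpret A: Vector_Spaces.linear scale scale A by (fact A)
  interpret B: Vector_Spaces.linear scale scale B by (fact B)
  have anticomm: "A (B y) + B (A y) = 0" for y
    using sum_idem[of y] by (simp add: A.add B.add idem algebra_simps)
  have "A (B (A x)) = - A (B x)"
    using anticomm[of x] by (metis A.neg add.commute add_eq_0_iff idem(1))
  moreover have "A (B (A x)) = - B (A x)"
    using anticomm[of "A x"] by (simp add: idem eq_neg_iff_add_eq_0)
  ultimately show ?thesis by simp
qed

text \<open>On the image of \<open>A \<circ> B\<close> the operator \<open>I + (\<zeta> - 1) A + (\<omega> - 1) B\<close> acts as the scalar
  \<open>\<zeta> + \<omega> - 1\<close>, which can be chosen not to be an \<open>n\<close>-th root of unity.\<close>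

lemma orthogonal_if_unipotent_at_roots_of_unity:
  fixes scale :: "'k::field \<Rightarrow> 'm::ab_group_add \<Rightarrow> 'm"
  assumes A: "Vector_Spaces.linear scale scale A" and B: "Vector_Spaces.linear scale scale B"
    and idem: "\<And>x. A (A x) = A x" "\<And>x. B (B x) = B x" and comm: "\<And>x. A (B x) = B (A x)"
    and card: "card {z::'k. z ^ n = 1} = n" and "n \<ge> 2"
    and unipotent: "\<And>\<zeta> \<omega>. \<zeta> ^ n = 1 \<Longrightarrow> \<omega> ^ n = 1 \<Longrightarrow>
      (\<lambda>x. x + scale (\<zeta> - 1) (A x) + scale (\<omega> - 1) (B x)) ^^ n = id"
  shows "A (B x) = 0"
proof -
  interpret A: Vector_Spaces.linear scale scale A by (fact A)
  interpret B: Vector_Spaces.linear scale scale B by (fact B)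
  obtain \<zeta> \<omega> :: 'k where roots: "\<zeta> ^ n = 1" "\<omega> ^ n = 1" and "(\<zeta> + \<omega> - 1) ^ n \<noteq> 1"
    using exists_roots_of_unity_sum_minus_1_not_root[OF card \<open>n \<ge> 2\<close>] by blast
  define c where "c = \<zeta> + \<omega> - 1"
  define T where "T x = x + scale (\<zeta> - 1) (A x) + scale (\<omega> - 1) (B x)" for x
  have eigen: "A (B (T y)) = scale c (A (B y))" for y
    by (simp add: T_def c_def A.add B.add A.diff B.diff A.scale B.scale idem comm[symmetric]
        A.vs1.scale_left_distrib A.vs1.scale_left_diff_distrib algebra_simps)
  have "A (B ((T ^^ k) y)) = scale (c ^ k) (A (B y))" for k y
    by (induction k) (simp_all add: eigen)
  moreover have "T ^^ n = id"
    using unipotent[OF roots] by (simp add: T_def[abs_def])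
  ultimately have "scale (c ^ n - 1) (A (B x)) = 0"
    by (metis A.vs1.scale_left_diff_distrib id_apply right_minus_eq A.vs1.scale_one)
  then show ?thesis
    using \<open>(\<zeta> + \<omega> - 1) ^ n \<noteq> 1\<close> by (simp add: c_def)
qed

lemma vector_power_nth: "(x ^ m) $ i = (x $ i) ^ m"
  for x :: "'a::semiring_1 ^ 'n"
  by (induction m) simp_all

locale roots_of_unity_preserving =
  fixes scale :: "'k::field \<Rightarrow> 'm::ab_group_add \<Rightarrow> 'm"
    and \<phi> :: "'k ^ 'd \<Rightarrow> 'm \<Rightarrow> 'm"
    and n :: nat
  assumes linear_\<phi>: "\<And>a. Vector_Spaces.linear scale scale (\<phi> a)"
    and \<phi>_add: "\<And>a b. \<phi> (a + b) = (\<lambda>x. \<phi> a x + \<phi> b x)"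
    and \<phi>_scale: "\<And>c a. \<phi> (c *s a) = (\<lambda>x. scale c (\<phi> a x))"
    and card_roots: "card {z::'k. z ^ n = 1} = n"
    and n_ge_2: "n \<ge> 2"
    and \<phi>_1: "\<phi> 1 = id"
    and \<phi>_power: "\<And>a. a ^ n = 1 \<Longrightarrow> \<phi> a ^^ n = id"
begin

sublocale vector_space scale
  using linear_\<phi> Vector_Spaces.linear_def by blast

lemma \<phi>_0: "\<phi> 0 = (\<lambda>x. 0)"
  using \<phi>_scale[of 0 0] by simp

lemma \<phi>_sum: "\<phi> (\<Sum>i\<in>A. f i) = (\<lambda>x. \<Sum>i\<in>A. \<phi> (f i) x)"
  by (induction A rule: infinite_finite_induct) (simp_all add: \<phi>_0 \<phi>_add)

lemma \<phi>_basis_expansion: "\<phi> a x = (\<Sum>i\<in>UNIV. scale (a $ i) (\<phi> (axis i 1) x))"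
  by (subst basis_expansion[of a, symmetric]) (simp add: \<phi>_sum \<phi>_scale)

lemma idempotent_if_0_1:
  assumes u: "\<And>i. u $ i = 0 \<or> u $ i = 1"
  shows "\<phi> u (\<phi> u x) = \<phi> u x"
proof -
  interpret linear_endomorphism scale "\<phi> u"
    using linear_\<phi> by (simp add: linear_endomorphism_def)
  show ?thesis
  proof (rule idempotent_if_unipotent_at_roots_of_unity[OF card_roots n_ge_2])
    fix \<zeta> :: 'k assume "\<zeta> ^ n = 1"
    have "((1 + (\<zeta> - 1) *s u) ^ n) $ i = 1" for i
      by (rule disjE[OF u[of i]]) (simp_all add: vector_power_nth \<open>\<zeta> ^ n = 1\<close>)
    then have "\<phi> (1 + (\<zeta> - 1) *s u) ^^ n = id"
      by (intro \<phi>_power) (simp add: vec_eq_iff)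
    moreover have "\<phi> (1 + (\<zeta> - 1) *s u) = (\<lambda>x. x + scale (\<zeta> - 1) (\<phi> u x))"
      by (simp only: \<phi>_add \<phi>_scale \<phi>_1 id_apply)
    ultimately show "(\<lambda>x. x + scale (\<zeta> - 1) (\<phi> u x)) ^^ n = id"
      by simp
  qed
qed

lemma axis_idempotent: "\<phi> (axis i 1) (\<phi> (axis i 1) x) = \<phi> (axis i 1) x"
  by (rule idempotent_if_0_1) (simp add: axis_def)

lemma axis_orthogonal:
  assumes "i \<noteq> j"
  shows "\<phi> (axis i 1) (\<phi> (axis j 1) x) = 0"
proof (rule orthogonal_if_unipotent_at_roots_of_unity[OF linear_\<phi> linear_\<phi> _ _ _ card_roots n_ge_2])
  show idem: "\<phi> (axis i 1) (\<phi> (axis i 1) y) = \<phi> (axis i 1) y"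
    "\<phi> (axis j 1) (\<phi> (axis j 1) y) = \<phi> (axis j 1) y" for y
    by (simp_all add: axis_idempotent)
  have "(axis i 1 + axis j 1) $ k = (0::'k) \<or> (axis i 1 + axis j 1) $ k = (1::'k)" for k
    using assms by (auto simp: axis_def)
  then have "\<phi> (axis i 1 + axis j 1) (\<phi> (axis i 1 + axis j 1) y) = \<phi> (axis i 1 + axis j 1) y" for y
    by (rule idempotent_if_0_1)
  then show "\<phi> (axis i 1) (\<phi> (axis j 1) y) = \<phi> (axis j 1) (\<phi> (axis i 1) y)" for y
    by (intro idempotents_commute_if_sum_idempotent[OF linear_\<phi> linear_\<phi> idem]) (simp add: \<phi>_add)
  fix \<zeta> \<omega> :: 'k assume roots: "\<zeta> ^ n = 1" "\<omega> ^ n = 1"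
  have "((1 + (\<zeta> - 1) *s axis i 1 + (\<omega> - 1) *s axis j 1) ^ n) $ k = 1" for k
    using assms roots by (simp add: vector_power_nth axis_def)
  then have "\<phi> (1 + (\<zeta> - 1) *s axis i 1 + (\<omega> - 1) *s axis j 1) ^^ n = id"
    by (intro \<phi>_power) (simp add: vec_eq_iff)
  moreover have "\<phi> (1 + (\<zeta> - 1) *s axis i 1 + (\<omega> - 1) *s axis j 1)
      = (\<lambda>x. x + scale (\<zeta> - 1) (\<phi> (axis i 1) x) + scale (\<omega> - 1) (\<phi> (axis j 1) x))"
    by (simp only: \<phi>_add \<phi>_scale \<phi>_1 id_apply)
  ultimately show "(\<lambda>x. x + scale (\<zeta> - 1) (\<phi> (axis i 1) x) + scale (\<omega> - 1) (\<phi> (axis j 1) x)) ^^ n = id"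
    by simp
qed

lemma \<phi>_mult: "\<phi> (a * b) = \<phi> a \<circ> \<phi> b"
proof
  fix x
  interpret \<phi>: Vector_Spaces.linear scale scale "\<phi> (axis i 1)" for i by (rule linear_\<phi>)
  have diagonal: "(\<Sum>j\<in>UNIV. scale (b $ j) (\<phi> (axis i 1) (\<phi> (axis j 1) x)))
      = scale (b $ i) (\<phi> (axis i 1) x)" for i
    by (subst sum.remove[of _ i]) (simp_all add: axis_orthogonal axis_idempotent)
  have "(\<phi> a \<circ> \<phi> b) x
      = (\<Sum>i\<in>UNIV. scale (a $ i) (\<Sum>j\<in>UNIV. scale (b $ j) (\<phi> (axis i 1) (\<phi> (axis j 1) x))))"
    by (simp add: \<phi>_basis_expansion[of a] \<phi>_basis_expansion[of b] \<phi>.sum \<phi>.scale)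
  also have "\<dots> = \<phi> (a * b) x"
    by (simp add: diagonal \<phi>_basis_expansion[of "a * b"])
  finally show "\<phi> (a * b) x = (\<phi> a \<circ> \<phi> b) x" ..
qed

end

theorem theoremA:
  fixes scale :: "'k::field \<Rightarrow> 'm::ab_group_add \<Rightarrow> 'm"
    and \<phi> :: "'k ^ 'd \<Rightarrow> ('m \<Rightarrow> 'm)"
    and n :: nat
  assumes M_fd: "\<exists>B. finite_dimensional_vector_space scale B"
    and \<phi>_End: "\<And>a. Vector_Spaces.linear scale scale (\<phi> a)"
    and \<phi>_add: "\<And>a b. \<phi> (a + b) = (\<lambda>x. \<phi> a x + \<phi> b x)"
    and \<phi>_scale: "\<And>c a. \<phi> (c *s a) = (\<lambda>x. scale c (\<phi> a x))"
    and n_gt: "n > 2"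
    and roots: "card {z::'k. z ^ n = 1} = n"
    and unit: "\<phi> 1 = id"
    and pow: "\<And>a. a ^ n = 1 \<Longrightarrow> (\<phi> a) ^^ n = id"
  shows "\<phi> 1 = id \<and> (\<forall>a b. \<phi> (a * b) = \<phi> a \<circ> \<phi> b)"
proof -
  have "roots_of_unity_preserving scale \<phi> n"
    using n_gt by (intro roots_of_unity_preserving.intro[OF \<phi>_End \<phi>_add \<phi>_scale roots _ unit pow]) simp
  with unit show ?thesis
    using roots_of_unity_preserving.\<phi>_mult by blast
qed

end
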